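(* Let $I\in\mathcal I_\lambda$, $a\in\{1,\dots,n-1\}$, with $a\in I_k$, $a+1\in I_l$, and let $s_{a,a+1}(z)=(z_1,\dots,z_{a-1},z_{a+1},z_a,z_{a+2},\dots,z_n)$. Then: if $k=l$: $W_I(t,s_{a,a+1}(z))=W_I(t,z)$; if $k<l$: $W_{s_{a,a+1}(I)}(t,z)=\frac{1-hz_a/z_{a+1}}{1-z_a/z_{a+1}}W_I(t,s_{a,a+1}(z))+(h-1)\frac{z_a/z_{a+1}}{1-z_a/z_{a+1}}W_I(t,z)$; if $k>l$: $W_{s_{a,a+1}(I)}(t,z)=\frac{1-h^{-1}z_{a+1}/z_a}{1-z_{a+1}/z_a}W_I(t,s_{a,a+1}(z))+(h^{-1}-1)\frac{z_{a+1}/z_a}{1-z_{a+1}/z_a}W_I(t,z)$. (Here the dependence on $h$ is suppressed.)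
   Context: Fix $N,n$, $\lambda\in\mathbb Z_{\ge0}^N$, $\sum\lambda_k=n$; $\lambda^{(k)}=\lambda_1+\dots+\lambda_k$, $\lambda^{\{1\}}=\sum_{k=1}^{N-1}\lambda^{(k)}$. $\mathcal I_\lambda$ = ordered partitions $I=(I_1,\dots,I_N)$ of $\{1,\dots,n\}$ with $|I_k|=\lambda_k$; $I_1\cup\dots\cup I_k=\{i^{(k)}_1<\dots<i^{(k)}_{\lambda^{(k)}}\}$; $s_{a,a+1}(I)$ is obtained from $I$ by swapping the elements $a$ and $a+1$. Weight functions: variables $t^{(k)}_a$ ($1\le k\le N-1$), $z_1,\dots,z_n$, $h$, $t^{(N)}_a=z_a$; $U_I=\prod_{k=1}^{N-1}\prod_{a=1}^{\lambda^{(k)}}\Big(\prod_{c:\,i^{(k+1)}_c<i^{(k)}_a}(1-ht^{(k+1)}_c/t^{(k)}_a)\prod_{c:\,i^{(k+1)}_c>i^{(k)}_a}(1-t^{(k+1)}_c/t^{(k)}_a)\prod_{b=a+1}^{\lambda^{(k)}}\frac{1-ht^{(k)}_b/t^{(k)}_a}{1-t^{(k)}_b/t^{(k)}_a}\Big)$ ($c\in\{1..\lambda^{(k+1)}\}$); $W_I=(1-h)^{\lambda^{\{1\}}}\mathrm{Sym}_{t^{(1)}}\cdots\mathrm{Sym}_{t^{(N-1)}}U_I$ (sum over permutations within each group $t^{(k)}$). *)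

theory Defs
  imports Complex_Main "HOL-Combinatorics.Permutations"
begin

definition lamsum :: "(nat \<Rightarrow> nat) \<Rightarrow> nat \<Rightarrow> nat" where
  "lamsum lam k = (\<Sum>j=1..k. lam j)"

definition lamsum1 :: "nat \<Rightarrow> (nat \<Rightarrow> nat) \<Rightarrow> nat" where
  "lamsum1 N lam = (\<Sum>k=1..N-1. lamsum lam k)"

definition ordered_partitions :: "nat \<Rightarrow> nat \<Rightarrow> (nat \<Rightarrow> nat) \<Rightarrow> (nat \<Rightarrow> nat set) set" where
  "ordered_partitions N n lam =
     {I. (\<forall>k\<in>{1..N}. card (I k) = lam k)
       \<and> (\<Union>k\<in>{1..N}. I k) = {1..n}
       \<and> (\<forall>k\<in>{1..N}. \<forall>j\<in>{1..N}. k \<noteq> j \<longrightarrow> I k \<inter> I j = {})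
       \<and> (\<forall>k. k \<notin> {1..N} \<longrightarrow> I k = {})}"

definition sw :: "nat \<Rightarrow> nat \<Rightarrow> nat" where
  "sw a x = (if x = a then a + 1 else if x = a + 1 then a else x)"

definition swapI :: "nat \<Rightarrow> (nat \<Rightarrow> nat set) \<Rightarrow> (nat \<Rightarrow> nat set)" where
  "swapI a I = (\<lambda>k. sw a ` I k)"

definition iel :: "(nat \<Rightarrow> nat set) \<Rightarrow> nat \<Rightarrow> nat \<Rightarrow> nat" where
  "iel I k c = sorted_list_of_set (\<Union>j\<in>{1..k}. I j) ! (c - 1)"

definition tv :: "nat \<Rightarrow> (nat \<Rightarrow> nat \<Rightarrow> 'a) \<Rightarrow> (nat \<Rightarrow> 'a) \<Rightarrow> nat \<Rightarrow> nat \<Rightarrow> 'a" where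
  "tv N t z k a = (if k = N then z a else t k a)"

definition U_fun :: "nat \<Rightarrow> (nat \<Rightarrow> nat) \<Rightarrow> 'a::field \<Rightarrow> (nat \<Rightarrow> nat set)
    \<Rightarrow> (nat \<Rightarrow> nat \<Rightarrow> 'a) \<Rightarrow> (nat \<Rightarrow> 'a) \<Rightarrow> 'a" where
  "U_fun N lam h I t z =
    (\<Prod>k=1..N-1. \<Prod>a=1..lamsum lam k.
       (\<Prod>c\<in>{c\<in>{1..lamsum lam (k+1)}. iel I (k+1) c < iel I k a}.
           1 - h * tv N t z (k+1) c / tv N t z k a)
     * (\<Prod>c\<in>{c\<in>{1..lamsum lam (k+1)}. iel I (k+1) c > iel I k a}.
           1 - tv N t z (k+1) c / tv N t z k a)
     * (\<Prod>b=a+1..lamsum lam k.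
           (1 - h * tv N t z k b / tv N t z k a) / (1 - tv N t z k b / tv N t z k a)))"

definition perm_tuples :: "nat \<Rightarrow> (nat \<Rightarrow> nat) \<Rightarrow> (nat \<Rightarrow> nat \<Rightarrow> nat) set" where
  "perm_tuples N lam =
     {\<sigma>. \<forall>k. (k \<in> {1..N-1} \<longrightarrow> \<sigma> k permutes {1..lamsum lam k})
             \<and> (k \<notin> {1..N-1} \<longrightarrow> \<sigma> k = id)}"

text \<open>W_I = (1-h)^{lambda^{1}} Sym_{t^(1)} ... Sym_{t^(N-1)} U_I (sum over permutations).\<close>
definition W_fun :: "nat \<Rightarrow> (nat \<Rightarrow> nat) \<Rightarrow> 'a::field \<Rightarrow> (nat \<Rightarrow> nat set)
    \<Rightarrow> (nat \<Rightarrow> nat \<Rightarrow> 'a) \<Rightarrow> (nat \<Rightarrow> 'a) \<Rightarrow> 'a" where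
  "W_fun N lam h I t z = (1 - h) ^ lamsum1 N lam *
     (\<Sum>\<sigma>\<in>perm_tuples N lam. U_fun N lam h I (\<lambda>k b. t k (\<sigma> k b)) z)"

end

theory Submission
  imports Defs
begin

text \<open>The product \<open>U_I\<close> factors into level factors, each coupling two consecutive rows
  \<open>t^(j)\<close>, \<open>t^(j+1)\<close> (with \<open>t^(N) = z\<close>), so \<open>W_I\<close> is a nested symmetrisation over the rows.
  Let \<open>L = max k l\<close>: from level \<open>L\<close> on, \<open>a\<close> and \<open>a + 1\<close> occupy adjacent positions of
  \<open>I_1 \<union> ... \<union> I_j\<close>, and below it at most one of them occurs. Relabelling by \<open>s_{a,a+1}\<close>
  therefore changes only the level factor between the rows \<open>L - 1\<close> and \<open>L\<close>, where a single entry of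
  row \<open>L - 1\<close> meets the two adjacent entries of row \<open>L\<close>; a two-term identity gives the exchange
  relation there. It is carried up to row \<open>N\<close> by induction: each higher level factor splits off a
  block in the four entries at the positions of \<open>a\<close>, \<open>a + 1\<close>, and pairing every permutation
  \<open>\<pi>\<close> of a row with \<open>\<pi> \<circ> s_{q,q+1}\<close> reduces the step to a rational identity for that block.
  For \<open>k = l\<close> the same pairing shows that each partial symmetrisation is symmetric in the two
  entries.\<close>

section \<open>Level factorisation of the weight function\<close>

definition cross_factor :: "'a::field \<Rightarrow> nat \<Rightarrow> nat \<Rightarrow> 'a \<Rightarrow> 'a \<Rightarrow> 'a" where
  "cross_factor h x y s u = (if y < x then 1 - h * s / u else if x < y then 1 - s / u else 1)"

definition pair_ratio :: "'a::field \<Rightarrow> 'a \<Rightarrow> 'a \<Rightarrow> 'a" where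
  "pair_ratio h u1 u2 = (1 - h * u2 / u1) / (1 - u2 / u1)"

definition cross_prod :: "'a::field \<Rightarrow> (nat \<Rightarrow> nat) \<Rightarrow> (nat \<Rightarrow> nat) \<Rightarrow> (nat \<times> nat) set
    \<Rightarrow> (nat \<Rightarrow> 'a) \<Rightarrow> (nat \<Rightarrow> 'a) \<Rightarrow> 'a" where
  "cross_prod h x y R u v = (\<Prod>p\<in>R. cross_factor h (x (fst p)) (y (snd p)) (v (snd p)) (u (fst p)))"

definition pair_prod :: "'a::field \<Rightarrow> (nat \<times> nat) set \<Rightarrow> (nat \<Rightarrow> 'a) \<Rightarrow> 'a" where
  "pair_prod h R u = (\<Prod>p\<in>R. pair_ratio h (u (fst p)) (u (snd p)))"

definition upper_pairs :: "nat \<Rightarrow> (nat \<times> nat) set" where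
  "upper_pairs M = Sigma {1..M} (\<lambda>a. {a+1..M})"

text \<open>The factor of \<open>U_I\<close> coupling the row \<open>u = t^(j)\<close> to the row \<open>v = t^(j+1)\<close>;
  \<open>m\<close> stands for \<open>k \<mapsto> \<lambda>^(k)\<close> and \<open>e j c\<close> for \<open>i^(j)_c\<close>.\<close>
definition level_factor :: "'a::field \<Rightarrow> (nat \<Rightarrow> nat) \<Rightarrow> (nat \<Rightarrow> nat \<Rightarrow> nat) \<Rightarrow> nat
    \<Rightarrow> (nat \<Rightarrow> 'a) \<Rightarrow> (nat \<Rightarrow> 'a) \<Rightarrow> 'a" where
  "level_factor h m e j u v =
     cross_prod h (e j) (e (Suc j)) ({1..m j} \<times> {1..m (Suc j)}) u v * pair_prod h (upper_pairs (m j)) u"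

lemma U_fun_eq_prod_level_factor:
  "U_fun N lam h I t z
     = (\<Prod>k=1..N-1. level_factor h (lamsum lam) (iel I) k (tv N t z k) (tv N t z (k+1)))"
proof -
  have "(\<Prod>a=1..lamsum lam k.
       (\<Prod>c\<in>{c\<in>{1..lamsum lam (k+1)}. iel I (k+1) c < iel I k a}.
           1 - h * tv N t z (k+1) c / tv N t z k a)
     * (\<Prod>c\<in>{c\<in>{1..lamsum lam (k+1)}. iel I (k+1) c > iel I k a}.
           1 - tv N t z (k+1) c / tv N t z k a)
     * (\<Prod>b=a+1..lamsum lam k.
           (1 - h * tv N t z k b / tv N t z k a) / (1 - tv N t z k b / tv N t z k a)))
    = level_factor h (lamsum lam) (iel I) k (tv N t z k) (tv N t z (k+1))" for k
  proof -
    let ?C = "{1..lamsum lam (k+1)}"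
    have cross: "(\<Prod>c\<in>{c\<in>?C. iel I (k+1) c < iel I k a}. 1 - h * tv N t z (k+1) c / tv N t z k a)
     * (\<Prod>c\<in>{c\<in>?C. iel I (k+1) c > iel I k a}. 1 - tv N t z (k+1) c / tv N t z k a)
     = (\<Prod>c\<in>?C. cross_factor h (iel I k a) (iel I (Suc k) c) (tv N t z (k+1) c) (tv N t z k a))" for a
      unfolding prod.inter_filter[OF finite_atLeastAtMost] prod.distrib[symmetric]
      by (rule prod.cong) (auto simp: cross_factor_def)
    have cross_prod_eq: "(\<Prod>a=1..lamsum lam k. \<Prod>c\<in>?C.
          cross_factor h (iel I k a) (iel I (Suc k) c) (tv N t z (k+1) c) (tv N t z k a))
        = cross_prod h (iel I k) (iel I (Suc k)) ({1..lamsum lam k} \<times> {1..lamsum lam (Suc k)})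
            (tv N t z k) (tv N t z (k+1))"
      by (simp add: cross_prod_def prod.cartesian_product split_def)
    have pair_prod_eq: "(\<Prod>a=1..lamsum lam k. \<Prod>b=a+1..lamsum lam k.
           (1 - h * tv N t z k b / tv N t z k a) / (1 - tv N t z k b / tv N t z k a))
        = pair_prod h (upper_pairs (lamsum lam k)) (tv N t z k)"
      by (simp add: pair_prod_def upper_pairs_def pair_ratio_def prod.Sigma split_def)
    show ?thesis
      unfolding level_factor_def cross_prod_eq[symmetric] pair_prod_eq[symmetric] prod.distrib[symmetric]
      by (rule prod.cong[OF refl]) (simp only: cross)
  qed
  then show ?thesis by (simp add: U_fun_def)
qed

text \<open>\<open>partial_sym h m e t j v\<close> is the product of the level factors below level \<open>j\<close>, with \<open>v\<close>
  in place of the row \<open>t^(j)\<close>, symmetrised over the rows \<open>t^(1)\<close>, ..., \<open>t^(j-1)\<close>.\<close>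
primrec partial_sym :: "'a::field \<Rightarrow> (nat \<Rightarrow> nat) \<Rightarrow> (nat \<Rightarrow> nat \<Rightarrow> nat) \<Rightarrow> (nat \<Rightarrow> nat \<Rightarrow> 'a)
    \<Rightarrow> nat \<Rightarrow> (nat \<Rightarrow> 'a) \<Rightarrow> 'a" where
  "partial_sym h m e t 0 v = 1"
| "partial_sym h m e t (Suc j) v = (if j = 0 then 1 else
      (\<Sum>\<pi>\<in>{\<pi>. \<pi> permutes {1..m j}}.
         partial_sym h m e t j (t j \<circ> \<pi>) * level_factor h m e j (t j \<circ> \<pi>) v))"

definition perm_tuples_below :: "(nat \<Rightarrow> nat) \<Rightarrow> nat \<Rightarrow> (nat \<Rightarrow> nat \<Rightarrow> nat) set" where
  "perm_tuples_below m j =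
     {\<sigma>. \<forall>k. (k \<in> {1..j-1} \<longrightarrow> \<sigma> k permutes {1..m k}) \<and> (k \<notin> {1..j-1} \<longrightarrow> \<sigma> k = id)}"

definition permuted_rows :: "(nat \<Rightarrow> nat \<Rightarrow> 'a) \<Rightarrow> (nat \<Rightarrow> nat \<Rightarrow> nat) \<Rightarrow> (nat \<Rightarrow> 'a) \<Rightarrow> nat
    \<Rightarrow> nat \<Rightarrow> nat \<Rightarrow> 'a" where
  "permuted_rows t \<sigma> v j i = (if i = j then v else t i \<circ> \<sigma> i)"

lemma perm_tuples_below_Suc_bij:
  assumes "j \<ge> 1"
  shows "bij_betw (\<lambda>(\<sigma>,\<pi>). \<sigma>(j:=\<pi>))
           (perm_tuples_below m j \<times> {\<pi>. \<pi> permutes {1..m j}}) (perm_tuples_below m (Suc j))"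
proof (rule bij_betw_byWitness[where f'="\<lambda>\<tau>. (\<tau>(j:=id), \<tau> j)"])
  show "\<forall>a\<in>perm_tuples_below m j \<times> {\<pi>. \<pi> permutes {1..m j}}.
          (\<lambda>\<tau>. (\<tau>(j := id), \<tau> j)) ((\<lambda>(\<sigma>, \<pi>). \<sigma>(j := \<pi>)) a) = a"
    using assms by (force simp: perm_tuples_below_def fun_eq_iff)
  show "\<forall>a'\<in>perm_tuples_below m (Suc j). (\<lambda>(\<sigma>, \<pi>). \<sigma>(j := \<pi>)) ((\<lambda>\<tau>. (\<tau>(j := id), \<tau> j)) a') = a'"
    by auto
  show "(\<lambda>(\<sigma>, \<pi>). \<sigma>(j := \<pi>)) ` (perm_tuples_below m j \<times> {\<pi>. \<pi> permutes {1..m j}})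
          \<subseteq> perm_tuples_below m (Suc j)"
    using assms by (auto simp: perm_tuples_below_def)
  show "(\<lambda>\<tau>. (\<tau>(j := id), \<tau> j)) ` perm_tuples_below m (Suc j)
          \<subseteq> perm_tuples_below m j \<times> {\<pi>. \<pi> permutes {1..m j}}"
    using assms by (auto simp: perm_tuples_below_def)
qed

lemma partial_sym_eq_sum:
  "1 \<le> j \<Longrightarrow> partial_sym h m e t j v = (\<Sum>\<sigma>\<in>perm_tuples_below m j.
     \<Prod>i=1..j-1. level_factor h m e i (permuted_rows t \<sigma> v j i) (permuted_rows t \<sigma> v j (i+1)))"
proof (induction j arbitrary: v rule: nat_induct_at_least)
  case base
  have "perm_tuples_below m 1 = {\<lambda>k. id}" by (auto simp: perm_tuples_below_def)
  then show ?case by simp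
next
  case (Suc j)
  let ?P = "{\<pi>. \<pi> permutes {1..m j}}"
  let ?F = "\<lambda>v j \<sigma> i. level_factor h m e i (permuted_rows t \<sigma> v j i) (permuted_rows t \<sigma> v j (i+1))"
  have split_top: "(\<Prod>i=1..j. ?F v (Suc j) (\<sigma>(j:=\<pi>)) i)
      = (\<Prod>i=1..j-1. ?F (t j \<circ> \<pi>) j \<sigma> i) * level_factor h m e j (t j \<circ> \<pi>) v" for \<sigma> \<pi>
  proof -
    have "(\<Prod>i=1..j-1. ?F v (Suc j) (\<sigma>(j:=\<pi>)) i) = (\<Prod>i=1..j-1. ?F (t j \<circ> \<pi>) j \<sigma> i)"
      by (rule prod.cong) (auto simp: permuted_rows_def)
    moreover have "{1..j} = insert j {1..j-1}" "j \<notin> {1..j-1}" using Suc.hyps by auto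
    ultimately show ?thesis by (simp add: permuted_rows_def mult.commute)
  qed
  have "(\<Sum>\<sigma>\<in>perm_tuples_below m (Suc j). \<Prod>i=1..Suc j-1. ?F v (Suc j) \<sigma> i)
     = (\<Sum>x\<in>perm_tuples_below m j \<times> ?P. (\<Prod>i=1..j. ?F v (Suc j) ((\<lambda>(\<sigma>,\<pi>). \<sigma>(j:=\<pi>)) x) i))"
    by (simp add: sum.reindex_bij_betw[symmetric, OF perm_tuples_below_Suc_bij[OF Suc.hyps]])
  also have "\<dots> = (\<Sum>\<sigma>\<in>perm_tuples_below m j. \<Sum>\<pi>\<in>?P. \<Prod>i=1..j. ?F v (Suc j) (\<sigma>(j:=\<pi>)) i)"
    by (simp add: sum.cartesian_product split_def)
  also have "\<dots> = (\<Sum>\<pi>\<in>?P. \<Sum>\<sigma>\<in>perm_tuples_below m j.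
                    (\<Prod>i=1..j-1. ?F (t j \<circ> \<pi>) j \<sigma> i) * level_factor h m e j (t j \<circ> \<pi>) v)"
    by (simp only: split_top sum.swap[of _ "perm_tuples_below m j"])
  also have "\<dots> = partial_sym h m e t (Suc j) v"
    using Suc.hyps by (simp add: Suc.IH sum_distrib_right comp_def)
  finally show ?case by simp
qed

lemma W_fun_eq_partial_sym:
  assumes "N \<ge> 1"
  shows "W_fun N lam h I t z = (1 - h) ^ lamsum1 N lam * partial_sym h (lamsum lam) (iel I) t N z"
proof -
  have "perm_tuples N lam = perm_tuples_below (lamsum lam) N"
    by (simp add: perm_tuples_def perm_tuples_below_def)
  moreover have "tv N (\<lambda>k b. t k (\<sigma> k b)) z i = permuted_rows t \<sigma> z N i" for \<sigma> i
    by (auto simp: tv_def permuted_rows_def fun_eq_iff)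
  ultimately show ?thesis
    using assms by (simp add: W_fun_def partial_sym_eq_sum U_fun_eq_prod_level_factor)
qed

section \<open>Rational identities\<close>

definition alpha_lt :: "'a::field \<Rightarrow> 'a \<Rightarrow> 'a \<Rightarrow> 'a" where
  "alpha_lt h x y = (1 - h * x / y) / (1 - x / y)"

definition beta_lt :: "'a::field \<Rightarrow> 'a \<Rightarrow> 'a \<Rightarrow> 'a" where
  "beta_lt h x y = (h - 1) * ((x / y) / (1 - x / y))"

definition alpha_gt :: "'a::field \<Rightarrow> 'a \<Rightarrow> 'a \<Rightarrow> 'a" where
  "alpha_gt h x y = (1 - inverse h * y / x) / (1 - y / x)"

definition beta_gt :: "'a::field \<Rightarrow> 'a \<Rightarrow> 'a \<Rightarrow> 'a" where
  "beta_gt h x y = (inverse h - 1) * ((y / x) / (1 - y / x))"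

text \<open>The factors of \<open>level_factor\<close> that involve only the entries \<open>u1, u2\<close> and \<open>v1, v2\<close> of two
  consecutive rows sitting at the (adjacent) positions of \<open>a\<close> and \<open>a + 1\<close>.\<close>
definition block_factor :: "'a::field \<Rightarrow> 'a \<Rightarrow> 'a \<Rightarrow> 'a \<Rightarrow> 'a \<Rightarrow> 'a" where
  "block_factor h u1 u2 v1 v2 = (1 - v2 / u1) * (1 - h * v1 / u2) * pair_ratio h u1 u2"

lemma one_minus_divide: "y \<noteq> 0 \<Longrightarrow> 1 - x / y = (y - x) / (y::'a::field)"
  by (simp add: field_simps)

lemma alpha_lt_eq: "y \<noteq> 0 \<Longrightarrow> x \<noteq> y \<Longrightarrow> alpha_lt h x y = (y - h * x) / (y - x)"
  by (simp add: alpha_lt_def one_minus_divide)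

lemma beta_lt_eq: "y \<noteq> 0 \<Longrightarrow> x \<noteq> y \<Longrightarrow> beta_lt h x y = (h - 1) * x / (y - x)"
  by (simp add: beta_lt_def one_minus_divide)

lemma alpha_gt_eq:
  "x \<noteq> 0 \<Longrightarrow> h \<noteq> 0 \<Longrightarrow> x \<noteq> y \<Longrightarrow> alpha_gt h x y = (h * x - y) / (h * (x - y))"
  by (simp add: alpha_gt_def one_minus_divide field_simps)

lemma beta_gt_eq:
  "x \<noteq> 0 \<Longrightarrow> h \<noteq> 0 \<Longrightarrow> x \<noteq> y \<Longrightarrow> beta_gt h x y = (1 - h) * y / (h * (x - y))"
  by (simp add: beta_gt_def one_minus_divide field_simps)

lemma block_factor_eq:
  "u1 \<noteq> 0 \<Longrightarrow> u2 \<noteq> 0 \<Longrightarrow> u1 \<noteq> u2 \<Longrightarrow> block_factor h u1 u2 v1 v2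
     = (u1 - v2) * (u2 - h * v1) * (u1 - h * u2) / (u1 * u2 * (u1 - u2))"
  by (simp add: block_factor_def pair_ratio_def one_minus_divide)

lemma block_exchange_lt:
  fixes u1 u2 v1 v2 :: "'a::field"
  assumes "u1 \<noteq> 0" "u2 \<noteq> 0" "u1 \<noteq> u2" "v1 \<noteq> 0" "v2 \<noteq> 0" "v1 \<noteq> v2"
  shows "alpha_lt h u2 u1 * block_factor h u2 u1 v1 v2 + beta_lt h u1 u2 * block_factor h u1 u2 v1 v2
       = alpha_lt h v1 v2 * block_factor h u1 u2 v2 v1 + beta_lt h v1 v2 * block_factor h u1 u2 v1 v2"
proof -
  have "u1 - u2 \<noteq> 0" "u2 - u1 \<noteq> 0" "v1 - v2 \<noteq> 0" "v2 - v1 \<noteq> 0" using assms by auto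
  with assms show ?thesis
    by (simp add: alpha_lt_eq beta_lt_eq block_factor_eq divide_simps; simp add: algebra_simps)
qed

lemma block_exchange_gt:
  fixes u1 u2 v1 v2 :: "'a::field"
  assumes "u1 \<noteq> 0" "u2 \<noteq> 0" "u1 \<noteq> u2" "v1 \<noteq> 0" "v2 \<noteq> 0" "v1 \<noteq> v2" "h \<noteq> 0"
  shows "alpha_gt h u2 u1 * block_factor h u2 u1 v1 v2 + beta_gt h u1 u2 * block_factor h u1 u2 v1 v2
       = alpha_gt h v1 v2 * block_factor h u1 u2 v2 v1 + beta_gt h v1 v2 * block_factor h u1 u2 v1 v2"
proof -
  have "u1 - u2 \<noteq> 0" "u2 - u1 \<noteq> 0" "v1 - v2 \<noteq> 0" "v2 - v1 \<noteq> 0" using assms by auto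
  with assms show ?thesis
    by (simp add: alpha_gt_eq beta_gt_eq block_factor_eq divide_simps; simp add: algebra_simps)
qed

lemma block_factor_sym_sum:
  fixes u1 u2 :: "'a::field"
  assumes "u1 \<noteq> 0" "u2 \<noteq> 0" "u1 \<noteq> u2"
  shows "block_factor h u1 u2 v1 v2 + block_factor h u2 u1 v1 v2
       = block_factor h u1 u2 v2 v1 + block_factor h u2 u1 v2 v1"
proof -
  have "u1 - u2 \<noteq> 0" "u2 - u1 \<noteq> 0" using assms by auto
  with assms show ?thesis
    by (simp add: block_factor_eq divide_simps; simp add: algebra_simps)
qed

lemma cross_exchange_lt:
  fixes u v1 v2 :: "'a::field"
  assumes "u \<noteq> 0" "v1 \<noteq> 0" "v2 \<noteq> 0" "v1 \<noteq> v2"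
  shows "1 - h * v1 / u = alpha_lt h v1 v2 * (1 - v1 / u) + beta_lt h v1 v2 * (1 - v2 / u)"
proof -
  have "v1 - v2 \<noteq> 0" "v2 - v1 \<noteq> 0" using assms by auto
  with assms show ?thesis
    by (simp add: alpha_lt_eq beta_lt_eq divide_simps; simp add: algebra_simps)
qed

lemma cross_exchange_gt:
  fixes u v1 v2 :: "'a::field"
  assumes "u \<noteq> 0" "v1 \<noteq> 0" "v2 \<noteq> 0" "v1 \<noteq> v2" "h \<noteq> 0"
  shows "1 - v2 / u = alpha_gt h v1 v2 * (1 - h * v2 / u) + beta_gt h v1 v2 * (1 - h * v1 / u)"
proof -
  have "v1 - v2 \<noteq> 0" "v2 - v1 \<noteq> 0" using assms by auto
  with assms show ?thesis
    by (simp add: alpha_gt_eq beta_gt_eq divide_simps; simp add: algebra_simps)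
qed

section \<open>Relabelling and reindexing by adjacent transpositions\<close>

lemma sw_sw [simp]: "sw q (sw q i) = i"
  by (simp add: sw_def)

lemma sw_eq_transpose: "sw q = Transposition.transpose q (Suc q)"
  by (auto simp: sw_def fun_eq_iff transpose_def)

lemma sw_less_iff:
  "\<not> ((x = A \<and> y = A + 1) \<or> (x = A + 1 \<and> y = A)) \<Longrightarrow> sw A x < sw A y \<longleftrightarrow> x < y"
  unfolding sw_def by auto

lemma sw_strict_mono_on: "\<not> (A \<in> S \<and> A + 1 \<in> S) \<Longrightarrow> strict_mono_on S (sw A)"
  unfolding strict_mono_on_def sw_def by auto

lemma sw_image_eq:
  assumes "A \<in> S" "A + 1 \<in> S"
  shows "sw A ` S = S"
proof
  show "sw A ` S \<subseteq> S" using assms by (auto simp: sw_def)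
  show "S \<subseteq> sw A ` S" using assms by (auto simp: sw_def image_iff intro: bexI[where x="sw A _"])
qed

lemma sw_mem_adjacent_iff: "sw q i \<in> {q, q+1} \<longleftrightarrow> i \<in> {q, q+1}"
  by (auto simp: sw_def)

lemma sw_mem_atLeastAtMost_iff:
  "1 \<le> q \<Longrightarrow> q + 1 \<le> M \<Longrightarrow> sw q i \<in> {1..M} \<longleftrightarrow> i \<in> {1..M}"
  by (auto simp: sw_def)

lemma inj_on_apart_adjacent:
  assumes "inj_on y S" "q \<in> S" "q + 1 \<in> S" "y q = A" "y (q+1) = A+1" "c \<in> S" "c \<notin> {q, q+1}"
  shows "y c \<noteq> A \<and> y c \<noteq> A+1"
  using inj_onD[OF assms(1), of c q] inj_onD[OF assms(1), of c "q+1"] assms(2-7) by auto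

lemma bij_betw_involution: "(\<forall>p\<in>R. f p \<in> R) \<Longrightarrow> (\<forall>p\<in>R. f (f p) = p) \<Longrightarrow> bij_betw f R R"
  by (rule bij_betw_byWitness[where f'=f]) auto

lemma cross_prod_reindex:
  assumes "\<forall>p\<in>R. (\<sigma> (fst p), \<rho> (snd p)) \<in> R" "\<And>i. \<sigma> (\<sigma> i) = i" "\<And>i. \<rho> (\<rho> i) = i"
  shows "cross_prod h x y R (u \<circ> \<sigma>) (v \<circ> \<rho>) = cross_prod h (x \<circ> \<sigma>) (y \<circ> \<rho>) R u v"
proof -
  have "bij_betw (\<lambda>p. (\<sigma> (fst p), \<rho> (snd p))) R R"
    by (rule bij_betw_involution) (use assms in auto)
  from prod.reindex_bij_betw[OF this,
      of "\<lambda>p. cross_factor h ((x \<circ> \<sigma>) (fst p)) ((y \<circ> \<rho>) (snd p)) (v (snd p)) (u (fst p))"]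
  show ?thesis
    by (simp add: cross_prod_def assms)
qed

lemma cross_prod_cong_order:
  assumes "\<forall>p\<in>R. (y' (snd p) < x' (fst p) \<longleftrightarrow> y (snd p) < x (fst p))
                \<and> (x' (fst p) < y' (snd p) \<longleftrightarrow> x (fst p) < y (snd p))"
  shows "cross_prod h x' y' R u v = cross_prod h x y R u v"
  unfolding cross_prod_def using assms by (intro prod.cong) (auto simp: cross_factor_def)

lemma pair_prod_reindex:
  assumes "\<forall>p\<in>R. (\<sigma> (fst p), \<sigma> (snd p)) \<in> R" "\<And>i. \<sigma> (\<sigma> i) = i"
  shows "pair_prod h R (u \<circ> \<sigma>) = pair_prod h R u"
proof -
  have "bij_betw (\<lambda>p. (\<sigma> (fst p), \<sigma> (snd p))) R R"
    by (rule bij_betw_involution) (use assms in auto)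
  from prod.reindex_bij_betw[OF this, of "\<lambda>p. pair_ratio h (u (fst p)) (u (snd p))"]
  show ?thesis
    by (simp add: pair_prod_def assms)
qed

text \<open>Exchanging two adjacent entries of a row does not matter as long as the labels \<open>A\<close> and
  \<open>A + 1\<close> they carry are never compared with a label in \<open>{A, A + 1}\<close>: no label lies strictly
  between them.\<close>
lemma cross_prod_comp_sw_left:
  fixes x y :: "nat \<Rightarrow> nat"
  assumes closed: "\<forall>p\<in>R. (sw q (fst p), snd p) \<in> R"
    and xq: "x q = A" "x (q+1) = A+1"
    and apart: "\<forall>p\<in>R. fst p \<in> {q, q+1} \<longrightarrow> y (snd p) \<noteq> A \<and> y (snd p) \<noteq> A+1"
  shows "cross_prod h x y R (u \<circ> sw q) v = cross_prod h x y R u v"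
proof -
  have "cross_prod h x y R (u \<circ> sw q) (v \<circ> id) = cross_prod h (x \<circ> sw q) (y \<circ> id) R u v"
    by (rule cross_prod_reindex) (use closed in auto)
  also have "\<dots> = cross_prod h x y R u v"
    by (rule cross_prod_cong_order) (use xq apart in \<open>auto simp: sw_def\<close>)
  finally show ?thesis by simp
qed

lemma cross_prod_comp_sw_right:
  fixes x y :: "nat \<Rightarrow> nat"
  assumes closed: "\<forall>p\<in>R. (fst p, sw q (snd p)) \<in> R"
    and yq: "y q = A" "y (q+1) = A+1"
    and apart: "\<forall>p\<in>R. snd p \<in> {q, q+1} \<longrightarrow> x (fst p) \<noteq> A \<and> x (fst p) \<noteq> A+1"
  shows "cross_prod h x y R u (v \<circ> sw q) = cross_prod h x y R u v"
proof -
  have "cross_prod h x y R (u \<circ> id) (v \<circ> sw q) = cross_prod h (x \<circ> id) (y \<circ> sw q) R u v"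
    by (rule cross_prod_reindex) (use closed in auto)
  also have "\<dots> = cross_prod h x y R u v"
    by (rule cross_prod_cong_order) (use yq apart in \<open>auto simp: sw_def\<close>)
  finally show ?thesis by simp
qed

lemma cross_prod_split_row:
  assumes "r \<in> {1..M}" "1 \<le> q" "q + 1 \<le> M'"
  shows "cross_prod h x y ({1..M} \<times> {1..M'}) u v
     = cross_prod h x y ({1..M} \<times> {1..M'} - {r} \<times> {q, q+1}) u v
       * (cross_factor h (x r) (y q) (v q) (u r) * cross_factor h (x r) (y (q+1)) (v (q+1)) (u r))"
proof -
  have row_sub: "{r} \<times> {q, q+1} \<subseteq> {1..M} \<times> {1..M'}" using assms by auto
  show ?thesis
    unfolding cross_prod_def by (subst prod.subset_diff[OF row_sub]) auto
qed

definition level_factor_splits_block ::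
    "'a::field \<Rightarrow> (nat \<Rightarrow> nat) \<Rightarrow> (nat \<Rightarrow> nat \<Rightarrow> nat) \<Rightarrow> nat \<Rightarrow> nat \<Rightarrow> nat \<Rightarrow> bool" where
  "level_factor_splits_block h m e j q q' \<longleftrightarrow> (\<exists>Out.
      (\<forall>u v. level_factor h m e j u v = Out u v * block_factor h (u q) (u (q+1)) (v q') (v (q'+1)))
    \<and> (\<forall>u v. Out (u \<circ> sw q) v = Out u v) \<and> (\<forall>u v. Out u (v \<circ> sw q') = Out u v))"

lemma level_factor_splits_blockI:
  fixes e :: "nat \<Rightarrow> nat \<Rightarrow> nat"
  assumes q: "1 \<le> q" "q + 1 \<le> m j" and q': "1 \<le> q'" "q' + 1 \<le> m (Suc j)"
    and xq: "e j q = A" "e j (q+1) = A+1" and yq: "e (Suc j) q' = A" "e (Suc j) (q'+1) = A+1"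
    and ix: "inj_on (e j) {1..m j}" and iy: "inj_on (e (Suc j)) {1..m (Suc j)}"
  shows "level_factor_splits_block h m e j q q'"
proof -
  define Rc where "Rc = {1..m j} \<times> {1..m (Suc j)} - {q, q+1} \<times> {q', q'+1}"
  define Rd where "Rd = upper_pairs (m j) - {(q, q+1)}"
  define Out where "Out u v = cross_prod h (e j) (e (Suc j)) Rc u v * pair_prod h Rd u" for u v
  have block_sub: "{q, q+1} \<times> {q', q'+1} \<subseteq> {1..m j} \<times> {1..m (Suc j)}" using q q' by auto
  have cross: "cross_prod h (e j) (e (Suc j)) ({1..m j} \<times> {1..m (Suc j)}) u v
      = cross_prod h (e j) (e (Suc j)) Rc u v * ((1 - v (q'+1) / u q) * (1 - h * v q' / u (q+1)))"
    for u v
    unfolding cross_prod_def Rc_def using xq yq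
    by (subst prod.subset_diff[OF block_sub]) (auto simp: cross_factor_def)
  have pair_sub: "{(q, q+1)} \<subseteq> upper_pairs (m j)" using q by (auto simp: upper_pairs_def)
  have pair: "pair_prod h (upper_pairs (m j)) u = pair_prod h Rd u * pair_ratio h (u q) (u (q+1))"
    for u
    unfolding pair_prod_def Rd_def
    by (subst prod.subset_diff[OF pair_sub]) (auto simp: upper_pairs_def)
  have "Out (u \<circ> sw q) v = Out u v" for u v
  proof -
    have "\<forall>p\<in>Rc. (sw q (fst p), snd p) \<in> Rc"
    proof
      fix p assume "p \<in> Rc"
      then show "(sw q (fst p), snd p) \<in> Rc"
        unfolding Rc_def Diff_iff mem_Times_iff fst_conv snd_conv
          sw_mem_atLeastAtMost_iff[OF q] sw_mem_adjacent_iff .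
    qed
    moreover have "\<forall>p\<in>Rc. fst p \<in> {q, q+1} \<longrightarrow> e (Suc j) (snd p) \<noteq> A \<and> e (Suc j) (snd p) \<noteq> A+1"
    proof (intro ballI impI)
      fix p assume "p \<in> Rc" "fst p \<in> {q, q+1}"
      then have "snd p \<in> {1..m (Suc j)}" "snd p \<notin> {q', q'+1}" by (auto simp: Rc_def)
      with q' show "e (Suc j) (snd p) \<noteq> A \<and> e (Suc j) (snd p) \<noteq> A+1"
        by (intro inj_on_apart_adjacent[OF iy _ _ yq]) auto
    qed
    ultimately have "cross_prod h (e j) (e (Suc j)) Rc (u \<circ> sw q) v = cross_prod h (e j) (e (Suc j)) Rc u v"
      by (rule cross_prod_comp_sw_left[OF _ xq])
    moreover have "pair_prod h Rd (u \<circ> sw q) = pair_prod h Rd u"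
    proof (rule pair_prod_reindex, rule ballI)
      fix p assume "p \<in> Rd"
      moreover obtain b c where p: "p = (b, c)" by fastforce
      ultimately have bc: "1 \<le> b" "b < c" "c \<le> m j" "\<not> (b = q \<and> c = q + 1)"
        by (auto simp: Rd_def upper_pairs_def)
      then have "sw q b < sw q c" by (subst sw_less_iff) auto
      with bc show "(sw q (fst p), sw q (snd p)) \<in> Rd"
        using sw_mem_atLeastAtMost_iff[OF q, of b] sw_mem_atLeastAtMost_iff[OF q, of c]
        by (auto simp: p Rd_def upper_pairs_def sw_def)
    qed simp
    ultimately show ?thesis by (simp add: Out_def)
  qed
  moreover have "Out u (v \<circ> sw q') = Out u v" for u v
  proof -
    have "\<forall>p\<in>Rc. (fst p, sw q' (snd p)) \<in> Rc"
    proof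
      fix p assume "p \<in> Rc"
      then show "(fst p, sw q' (snd p)) \<in> Rc"
        unfolding Rc_def Diff_iff mem_Times_iff fst_conv snd_conv
          sw_mem_atLeastAtMost_iff[OF q'] sw_mem_adjacent_iff .
    qed
    moreover have "\<forall>p\<in>Rc. snd p \<in> {q', q'+1} \<longrightarrow> e j (fst p) \<noteq> A \<and> e j (fst p) \<noteq> A+1"
    proof (intro ballI impI)
      fix p assume "p \<in> Rc" "snd p \<in> {q', q'+1}"
      then have "fst p \<in> {1..m j}" "fst p \<notin> {q, q+1}" by (auto simp: Rc_def)
      with q show "e j (fst p) \<noteq> A \<and> e j (fst p) \<noteq> A+1"
        by (intro inj_on_apart_adjacent[OF ix _ _ xq]) auto
    qed
    ultimately have "cross_prod h (e j) (e (Suc j)) Rc u (v \<circ> sw q') = cross_prod h (e j) (e (Suc j)) Rc u v"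
      by (rule cross_prod_comp_sw_right[OF _ yq])
    then show ?thesis by (simp add: Out_def)
  qed
  moreover have "level_factor h m e j u v
      = Out u v * block_factor h (u q) (u (q+1)) (v q') (v (q'+1))" for u v
    unfolding level_factor_def Out_def cross pair block_factor_def by (simp only: mult_ac)
  ultimately show ?thesis
    unfolding level_factor_splits_block_def by blast
qed

lemma bij_betw_comp_sw:
  assumes "1 \<le> q" "q + 1 \<le> M"
  shows "bij_betw (\<lambda>\<pi>. \<pi> \<circ> sw q) {\<pi>. \<pi> permutes {1..M}} {\<pi>. \<pi> permutes {1..M}}"
proof (rule bij_betw_involution)
  have "sw q permutes {1..M}"
    unfolding sw_eq_transpose by (rule permutes_swap_id) (use assms in auto)
  then show "\<forall>p\<in>{\<pi>. \<pi> permutes {1..M}}. p \<circ> sw q \<in> {\<pi>. \<pi> permutes {1..M}}"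
    by (auto intro: permutes_compose)
  show "\<forall>p\<in>{\<pi>. \<pi> permutes {1..M}}. p \<circ> sw q \<circ> sw q = p"
    by (auto simp: fun_eq_iff)
qed

lemma sum_permutes_comp_sw:
  assumes "1 \<le> q" "q + 1 \<le> M"
  shows "(\<Sum>\<pi>\<in>{\<pi>. \<pi> permutes {1..M}}. g (\<pi> \<circ> sw q)) = (\<Sum>\<pi>\<in>{\<pi>. \<pi> permutes {1..M}}. g \<pi>)"
  using sum.reindex_bij_betw[OF bij_betw_comp_sw[OF assms], of g] by simp

lemma permuted_row_entries:
  fixes t :: "nat \<Rightarrow> 'a::zero"
  assumes "0 \<notin> t ` {1..M}" "inj_on t {1..M}" "\<pi> permutes {1..M}" "1 \<le> q" "q + 1 \<le> M"
  shows "(t \<circ> \<pi>) q \<noteq> 0" "(t \<circ> \<pi>) (q+1) \<noteq> 0" "(t \<circ> \<pi>) q \<noteq> (t \<circ> \<pi>) (q+1)"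
proof -
  have in_range: "\<pi> q \<in> {1..M}" "\<pi> (q+1) \<in> {1..M}"
    using assms(4,5) permutes_in_image[OF assms(3)] by auto
  then have "t (\<pi> q) \<in> t ` {1..M}" "t (\<pi> (q+1)) \<in> t ` {1..M}" by auto
  with assms(1) show "(t \<circ> \<pi>) q \<noteq> 0" "(t \<circ> \<pi>) (q+1) \<noteq> 0"
    unfolding comp_apply by metis+
  have "\<pi> q \<noteq> \<pi> (q+1)" using permutes_inj[OF assms(3)] by (simp add: inj_eq)
  then show "(t \<circ> \<pi>) q \<noteq> (t \<circ> \<pi>) (q+1)"
    using in_range inj_on_eq_iff[OF assms(2)] by simp
qed

section \<open>Induction steps for the partial symmetrisation\<close>

lemma partial_sym_Suc:
  "1 \<le> j \<Longrightarrow> partial_sym h m e t (Suc j) v = (\<Sum>\<pi>\<in>{\<pi>. \<pi> permutes {1..m j}}.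
     partial_sym h m e t j (t j \<circ> \<pi>) * level_factor h m e j (t j \<circ> \<pi>) v)"
  by simp

lemma partial_sym_cong:
  assumes "\<And>i u v. 1 \<le> i \<Longrightarrow> i < j \<Longrightarrow> level_factor h m e' i u v = level_factor h m e i u v"
  shows "partial_sym h m e' t j v = partial_sym h m e t j v"
  using assms
proof (induction j arbitrary: v)
  case (Suc j)
  then show ?case by (cases "j = 0") (simp_all add: o_def)
qed simp

text \<open>Pairing \<open>\<pi>\<close> with \<open>\<pi> \<circ> sw q\<close> symmetrises the block factor in \<open>u\<close>, and the symmetrised
  block factor is symmetric in \<open>v\<close> as well.\<close>
lemma partial_sym_Suc_swap_invariant:
  fixes h :: "'a::field_char_0"
  assumes j: "1 \<le> j" and q: "1 \<le> q" "q + 1 \<le> m j"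
    and hyp: "\<And>u. u q \<noteq> 0 \<Longrightarrow> u (q+1) \<noteq> 0 \<Longrightarrow> u q \<noteq> u (q+1) \<Longrightarrow>
                 partial_sym h m e t j (u \<circ> sw q) = partial_sym h m e t j u"
    and split: "level_factor_splits_block h m e j q q'"
    and t_nz: "0 \<notin> t j ` {1..m j}" and t_inj: "inj_on (t j) {1..m j}"
  shows "partial_sym h m e t (Suc j) (v \<circ> sw q') = partial_sym h m e t (Suc j) v"
proof -
  obtain Out where dec: "\<And>u v. level_factor h m e j u v
        = Out u v * block_factor h (u q) (u (q+1)) (v q') (v (q'+1))"
    and out_u: "\<And>u v. Out (u \<circ> sw q) v = Out u v" and out_v: "\<And>u v. Out u (v \<circ> sw q') = Out u v"
    using split unfolding level_factor_splits_block_def by blast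
  let ?P = "{\<pi>. \<pi> permutes {1..m j}}"
  define F where "F w \<pi> = partial_sym h m e t j (t j \<circ> \<pi>) * level_factor h m e j (t j \<circ> \<pi>) w"
    for w \<pi>
  have sw_at: "sw q' q' = q'+1" "sw q' (Suc q') = q'" "sw q q = q + 1" "sw q (Suc q) = q"
    by (auto simp: sw_def)
  have pair_sum: "F (v \<circ> sw q') \<pi> + F (v \<circ> sw q') (\<pi> \<circ> sw q) = F v \<pi> + F v (\<pi> \<circ> sw q)"
    if "\<pi> \<in> ?P" for \<pi>
  proof -
    let ?u = "t j \<circ> \<pi>"
    have u: "?u q \<noteq> 0" "?u (q+1) \<noteq> 0" "?u q \<noteq> ?u (q+1)"
      using permuted_row_entries[OF t_nz t_inj _ q] that by auto
    have comp: "t j \<circ> (\<pi> \<circ> sw q) = ?u \<circ> sw q" by (simp add: comp_assoc)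
    have "F (v \<circ> sw q') \<pi> + F (v \<circ> sw q') (\<pi> \<circ> sw q)
       = partial_sym h m e t j ?u * Out ?u v * (block_factor h (?u q) (?u (q+1)) (v (q'+1)) (v q')
           + block_factor h (?u (q+1)) (?u q) (v (q'+1)) (v q'))"
      unfolding F_def comp hyp[OF u] dec out_u out_v by (simp add: sw_at algebra_simps)
    also have "\<dots> = partial_sym h m e t j ?u * Out ?u v * (block_factor h (?u q) (?u (q+1)) (v q') (v (q'+1))
           + block_factor h (?u (q+1)) (?u q) (v q') (v (q'+1)))"
      using block_factor_sym_sum[OF u] by simp
    also have "\<dots> = F v \<pi> + F v (\<pi> \<circ> sw q)"
      unfolding F_def comp hyp[OF u] dec out_u out_v by (simp add: sw_at algebra_simps)
    finally show ?thesis .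
  qed
  have "2 * (\<Sum>\<pi>\<in>?P. F (v \<circ> sw q') \<pi>)
      = (\<Sum>\<pi>\<in>?P. F (v \<circ> sw q') \<pi>) + (\<Sum>\<pi>\<in>?P. F (v \<circ> sw q') (\<pi> \<circ> sw q))"
    using sum_permutes_comp_sw[OF q, of "F (v \<circ> sw q')"] by simp
  also have "\<dots> = (\<Sum>\<pi>\<in>?P. F v \<pi> + F v (\<pi> \<circ> sw q))"
    by (simp add: sum.distrib[symmetric] pair_sum)
  also have "\<dots> = 2 * (\<Sum>\<pi>\<in>?P. F v \<pi>)"
    using sum_permutes_comp_sw[OF q, of "F v"] by (simp add: sum.distrib)
  finally show ?thesis using j by (simp add: F_def)
qed

text \<open>The same pairing, now using an exchange identity of the block factor to carry an exchange
  relation from level \<open>j\<close> to level \<open>j + 1\<close>.\<close>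
lemma partial_sym_Suc_exchange:
  assumes j: "1 \<le> j" and q: "1 \<le> q" "q + 1 \<le> m j"
    and hyp: "\<And>u. u q \<noteq> 0 \<Longrightarrow> u (q+1) \<noteq> 0 \<Longrightarrow> u q \<noteq> u (q+1) \<Longrightarrow> partial_sym h m e' t j u
                 = \<alpha> (u q) (u (q+1)) * partial_sym h m e t j (u \<circ> sw q)
                   + \<beta> (u q) (u (q+1)) * partial_sym h m e t j u"
    and level_eq: "\<And>u v. level_factor h m e' j u v = level_factor h m e j u v"
    and split: "level_factor_splits_block h m e j q q'"
    and t_nz: "0 \<notin> t j ` {1..m j}" and t_inj: "inj_on (t j) {1..m j}"
    and exchange: "\<And>u1 u2. u1 \<noteq> 0 \<Longrightarrow> u2 \<noteq> 0 \<Longrightarrow> u1 \<noteq> u2 \<Longrightarrow>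
        \<alpha> u2 u1 * block_factor h u2 u1 (v q') (v (q'+1)) + \<beta> u1 u2 * block_factor h u1 u2 (v q') (v (q'+1))
      = \<alpha> (v q') (v (q'+1)) * block_factor h u1 u2 (v (q'+1)) (v q')
        + \<beta> (v q') (v (q'+1)) * block_factor h u1 u2 (v q') (v (q'+1))"
  shows "partial_sym h m e' t (Suc j) v
           = \<alpha> (v q') (v (q'+1)) * partial_sym h m e t (Suc j) (v \<circ> sw q')
             + \<beta> (v q') (v (q'+1)) * partial_sym h m e t (Suc j) v"
proof -
  obtain Out where dec: "\<And>u v. level_factor h m e j u v
        = Out u v * block_factor h (u q) (u (q+1)) (v q') (v (q'+1))"
    and out_u: "\<And>u v. Out (u \<circ> sw q) v = Out u v" and out_v: "\<And>u v. Out u (v \<circ> sw q') = Out u v"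
    using split unfolding level_factor_splits_block_def by blast
  let ?P = "{\<pi>. \<pi> permutes {1..m j}}"
  let ?a = "\<alpha> (v q') (v (q'+1))" and ?b = "\<beta> (v q') (v (q'+1))"
  define S where "S \<pi> = partial_sym h m e t j (t j \<circ> \<pi>)" for \<pi>
  define A where "A \<pi> = \<alpha> ((t j \<circ> \<pi>) q) ((t j \<circ> \<pi>) (q+1))
                          * partial_sym h m e t j (t j \<circ> \<pi> \<circ> sw q) * level_factor h m e j (t j \<circ> \<pi>) v"
    for \<pi>
  define B where "B \<pi> = \<beta> ((t j \<circ> \<pi>) q) ((t j \<circ> \<pi>) (q+1)) * S \<pi> * level_factor h m e j (t j \<circ> \<pi>) v"
    for \<pi>
  have sw_at: "sw q' q' = q'+1" "sw q' (Suc q') = q'" "sw q q = q + 1" "sw q (Suc q) = q"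
    by (auto simp: sw_def)
  have u: "(t j \<circ> \<pi>) q \<noteq> 0" "(t j \<circ> \<pi>) (q+1) \<noteq> 0" "(t j \<circ> \<pi>) q \<noteq> (t j \<circ> \<pi>) (q+1)"
    if "\<pi> \<in> ?P" for \<pi>
    using permuted_row_entries[OF t_nz t_inj _ q] that by auto
  have "partial_sym h m e' t j (t j \<circ> \<pi>) * level_factor h m e j (t j \<circ> \<pi>) v = A \<pi> + B \<pi>"
    if "\<pi> \<in> ?P" for \<pi>
    unfolding hyp[OF u[OF that]] A_def B_def S_def by (simp add: algebra_simps)
  then have "partial_sym h m e' t (Suc j) v = (\<Sum>\<pi>\<in>?P. A \<pi> + B \<pi>)"
    unfolding partial_sym_Suc[OF j] level_eq by (rule sum.cong[OF refl])
  also have "\<dots> = (\<Sum>\<pi>\<in>?P. A (\<pi> \<circ> sw q) + B \<pi>)"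
    by (simp only: sum.distrib sum_permutes_comp_sw[OF q])
  also have "\<dots> = (\<Sum>\<pi>\<in>?P. S \<pi> * (?a * level_factor h m e j (t j \<circ> \<pi>) (v \<circ> sw q')
                                   + ?b * level_factor h m e j (t j \<circ> \<pi>) v))"
  proof (rule sum.cong[OF refl])
    fix \<pi> assume \<pi>: "\<pi> \<in> ?P"
    let ?u = "t j \<circ> \<pi>"
    have comp: "t j \<circ> (\<pi> \<circ> sw q) = ?u \<circ> sw q" "?u \<circ> sw q \<circ> sw q = ?u"
      by (simp_all add: comp_assoc fun_eq_iff)
    have "A (\<pi> \<circ> sw q) + B \<pi>
       = S \<pi> * Out ?u v * (\<alpha> (?u (q+1)) (?u q) * block_factor h (?u (q+1)) (?u q) (v q') (v (q'+1))
            + \<beta> (?u q) (?u (q+1)) * block_factor h (?u q) (?u (q+1)) (v q') (v (q'+1)))"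
      unfolding A_def B_def S_def comp dec out_u by (simp add: sw_at algebra_simps)
    also have "\<dots> = S \<pi> * Out ?u v * (?a * block_factor h (?u q) (?u (q+1)) (v (q'+1)) (v q')
            + ?b * block_factor h (?u q) (?u (q+1)) (v q') (v (q'+1)))"
      using exchange[OF u[OF \<pi>]] by simp
    also have "\<dots> = S \<pi> * (?a * level_factor h m e j ?u (v \<circ> sw q') + ?b * level_factor h m e j ?u v)"
      unfolding dec out_v by (simp add: sw_at algebra_simps)
    finally show "A (\<pi> \<circ> sw q) + B \<pi>
        = S \<pi> * (?a * level_factor h m e j ?u (v \<circ> sw q') + ?b * level_factor h m e j ?u v)" .
  qed
  also have "\<dots> = ?a * partial_sym h m e t (Suc j) (v \<circ> sw q') + ?b * partial_sym h m e t (Suc j) v"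
    using j by (simp add: S_def sum_distrib_left sum.distrib algebra_simps)
  finally show ?thesis .
qed

lemma partial_sym_Suc_linear:
  assumes j: "1 \<le> j"
    and below: "\<And>u. partial_sym h m e' t j u = partial_sym h m e t j u"
    and level: "\<And>u. u r \<noteq> 0 \<Longrightarrow> level_factor h m e' j u v
                  = \<alpha> * level_factor h m e j u (v \<circ> sw q') + \<beta> * level_factor h m e j u v"
    and r: "r \<in> {1..m j}" and t_nz: "0 \<notin> t j ` {1..m j}"
  shows "partial_sym h m e' t (Suc j) v
           = \<alpha> * partial_sym h m e t (Suc j) (v \<circ> sw q') + \<beta> * partial_sym h m e t (Suc j) v"
proof -
  have "(t j \<circ> \<pi>) r \<noteq> 0" if "\<pi> permutes {1..m j}" for \<pi>
    using t_nz r permutes_in_image[OF that] by force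
  then show ?thesis
    using j by (auto simp: below level algebra_simps sum.distrib sum_distrib_left intro!: sum.cong)
qed

section \<open>Enumerating the unions of the parts\<close>

abbreviation sorted_nth :: "nat set \<Rightarrow> nat \<Rightarrow> nat" where
  "sorted_nth S c \<equiv> sorted_list_of_set S ! (c - 1)"

lemma sorted_nth_in: "finite S \<Longrightarrow> 1 \<le> c \<Longrightarrow> c \<le> card S \<Longrightarrow> sorted_nth S c \<in> S"
  by (metis One_nat_def Suc_le_eq Suc_pred length_sorted_list_of_set nth_mem set_sorted_list_of_set)

lemma sorted_nth_less:
  "finite S \<Longrightarrow> 1 \<le> c \<Longrightarrow> c < d \<Longrightarrow> d \<le> card S \<Longrightarrow> sorted_nth S c < sorted_nth S d"
  using sorted_wrt_nth_less[OF strict_sorted_list_of_set[of S], of "c - 1" "d - 1"] by simp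

lemma sorted_nth_less_iff:
  assumes "finite S" "c \<in> {1..card S}" "d \<in> {1..card S}"
  shows "sorted_nth S c < sorted_nth S d \<longleftrightarrow> c < d"
  using sorted_nth_less[OF assms(1), of c d] sorted_nth_less[OF assms(1), of d c] assms(2,3)
  by (cases c d rule: linorder_cases) auto

lemma inj_on_sorted_nth: "finite S \<Longrightarrow> inj_on (sorted_nth S) {1..card S}"
  by (rule inj_onI) (metis sorted_nth_less_iff less_irrefl linorder_neqE_nat)

lemma sorted_nth_surj:
  assumes "finite S" "x \<in> S"
  obtains c where "c \<in> {1..card S}" "sorted_nth S c = x"
proof -
  from assms have "x \<in> set (sorted_list_of_set S)" by simp
  then obtain i where "i < length (sorted_list_of_set S)" "sorted_list_of_set S ! i = x"
    by (auto simp: in_set_conv_nth)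
  with assms(1) show ?thesis by (intro that[of "i + 1"]) auto
qed

lemma sorted_nth_adjacent:
  assumes S: "finite S" and A: "A \<in> S" "A + 1 \<in> S"
  obtains c where "1 \<le> c" "c + 1 \<le> card S" "sorted_nth S c = A" "sorted_nth S (c+1) = A + 1"
proof -
  obtain c where c: "c \<in> {1..card S}" "sorted_nth S c = A" using sorted_nth_surj[OF S A(1)] .
  obtain d where d: "d \<in> {1..card S}" "sorted_nth S d = A + 1" using sorted_nth_surj[OF S A(2)] .
  have "c < d" using sorted_nth_less_iff[OF S c(1) d(1)] c d by simp
  moreover have "\<not> c + 1 < d"
  proof
    assume "c + 1 < d"
    then have "sorted_nth S c < sorted_nth S (c+1)" "sorted_nth S (c+1) < sorted_nth S d"
      using sorted_nth_less[OF S, of c "c+1"] sorted_nth_less[OF S, of "c+1" d] c d by auto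
    with c d show False by simp
  qed
  ultimately have "d = c + 1" by simp
  with c d show ?thesis by (intro that[of c]) auto
qed

lemma sorted_list_of_set_image_strict_mono:
  assumes S: "finite S" and mono: "strict_mono_on S g"
  shows "sorted_list_of_set (g ` S) = map g (sorted_list_of_set S)"
proof -
  have "sorted_wrt (<) (map g (sorted_list_of_set S))"
    unfolding sorted_wrt_map
    by (rule sorted_wrt_mono_rel[OF _ strict_sorted_list_of_set])
       (use mono S in \<open>auto simp: strict_mono_on_def\<close>)
  moreover have "set (map g (sorted_list_of_set S)) = g ` S" using S by simp
  moreover have "length (map g (sorted_list_of_set S)) = card (g ` S)"
    using S strict_mono_on_imp_inj_on[OF mono] by (simp add: card_image)
  ultimately show ?thesis
    using sorted_list_of_set_unique[of "g ` S" "map g (sorted_list_of_set S)"] S by auto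
qed

definition union_upto :: "(nat \<Rightarrow> nat set) \<Rightarrow> nat \<Rightarrow> nat set" where
  "union_upto I j = (\<Union>i\<in>{1..j}. I i)"

lemma iel_eq_sorted_nth: "iel I j c = sorted_nth (union_upto I j) c"
  by (simp add: iel_def union_upto_def)

lemma union_upto_swapI: "union_upto (swapI A I) j = sw A ` union_upto I j"
  by (auto simp: union_upto_def swapI_def)

lemma iel_swapI:
  assumes "finite (union_upto I j)" "c \<in> {1..card (union_upto I j)}"
  shows "iel (swapI A I) j c = (if A \<in> union_upto I j \<and> A + 1 \<in> union_upto I j
                                then iel I j c else sw A (iel I j c))"
proof (cases "A \<in> union_upto I j \<and> A + 1 \<in> union_upto I j")
  case True
  then show ?thesis by (simp add: iel_eq_sorted_nth union_upto_swapI sw_image_eq)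
next
  case False
  have "sorted_list_of_set (sw A ` union_upto I j) = map (sw A) (sorted_list_of_set (union_upto I j))"
    by (rule sorted_list_of_set_image_strict_mono[OF assms(1) sw_strict_mono_on[OF False]])
  moreover have "c - 1 < length (sorted_list_of_set (union_upto I j))" using assms(2) by auto
  ultimately show ?thesis
    using False by (auto simp: iel_eq_sorted_nth union_upto_swapI)
qed

section \<open>The swap of a and a + 1\<close>

locale adjacent_swap =
  fixes N n :: nat and lam :: "nat \<Rightarrow> nat" and I :: "nat \<Rightarrow> nat set" and a k l :: nat
    and h :: "'a::field_char_0" and t :: "nat \<Rightarrow> nat \<Rightarrow> 'a"
  assumes N: "N \<ge> 1"
    and lam_sum: "(\<Sum>j=1..N. lam j) = n"
    and I: "I \<in> ordered_partitions N n lam"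
    and k: "k \<in> {1..N}" "a \<in> I k"
    and l: "l \<in> {1..N}" "a + 1 \<in> I l"
    and h: "h \<noteq> 0"
    and t_nz: "\<And>j b. j \<in> {1..N-1} \<Longrightarrow> b \<in> {1..lamsum lam j} \<Longrightarrow> t j b \<noteq> 0"
    and t_dist: "\<And>j b c. j \<in> {1..N-1} \<Longrightarrow> b \<in> {1..lamsum lam j} \<Longrightarrow>
                   c \<in> {1..lamsum lam j} \<Longrightarrow> b \<noteq> c \<Longrightarrow> t j b \<noteq> t j c"
begin

abbreviation "m \<equiv> lamsum lam"
abbreviation "e \<equiv> iel I"
abbreviation "e' \<equiv> iel (swapI a I)"
abbreviation "L \<equiv> max k l"

text \<open>The position of \<open>a\<close> (followed by \<open>a + 1\<close>) in \<open>I_1 \<union> ... \<union> I_j\<close>; meaningful only for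
  \<open>L \<le> j \<le> N\<close>.\<close>
definition pos :: "nat \<Rightarrow> nat" where
  "pos j = (SOME q. 1 \<le> q \<and> q + 1 \<le> m j \<and> e j q = a \<and> e j (q+1) = a + 1)"

lemma part_card: "i \<in> {1..N} \<Longrightarrow> card (I i) = lam i"
  and part_Union: "(\<Union>i\<in>{1..N}. I i) = {1..n}"
  and part_disjoint: "i \<in> {1..N} \<Longrightarrow> i' \<in> {1..N} \<Longrightarrow> i \<noteq> i' \<Longrightarrow> I i \<inter> I i' = {}"
  and part_outside: "i \<notin> {1..N} \<Longrightarrow> I i = {}"
  using I by (auto simp: ordered_partitions_def)

lemma part_subset: "I i \<subseteq> {1..n}"
  using part_Union part_outside by (cases "i \<in> {1..N}") auto

lemma finite_union_upto: "finite (union_upto I j)"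
  using part_subset by (auto simp: union_upto_def intro: finite_subset)

lemma union_upto_mono: "j \<le> j' \<Longrightarrow> union_upto I j \<subseteq> union_upto I j'"
  unfolding union_upto_def by (rule UN_mono) auto

lemma card_union_upto: "j \<le> N \<Longrightarrow> card (union_upto I j) = m j"
proof -
  assume j: "j \<le> N"
  have "card (union_upto I j) = (\<Sum>i\<in>{1..j}. card (I i))"
    unfolding union_upto_def
    by (rule card_UN_disjoint) (use j part_subset part_disjoint in \<open>auto intro: finite_subset\<close>)
  also have "\<dots> = (\<Sum>i\<in>{1..j}. lam i)" using j part_card by (intro sum.cong) auto
  finally show ?thesis by (simp add: lamsum_def)
qed

lemma mem_union_upto_iff: "k' \<in> {1..N} \<Longrightarrow> x \<in> I k' \<Longrightarrow> x \<in> union_upto I j \<longleftrightarrow> k' \<le> j"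
proof
  assume k': "k' \<in> {1..N}" "x \<in> I k'" and "x \<in> union_upto I j"
  then obtain i where i: "i \<in> {1..j}" "x \<in> I i" by (auto simp: union_upto_def)
  then have "i \<in> {1..N}" using part_outside by fastforce
  then have "i = k'" using part_disjoint[of i k'] k' i by auto
  then show "k' \<le> j" using i by auto
next
  assume "k' \<in> {1..N}" "x \<in> I k'" "k' \<le> j"
  then show "x \<in> union_upto I j" by (auto simp: union_upto_def)
qed

lemma a_mem_union_upto_iff: "a \<in> union_upto I j \<longleftrightarrow> k \<le> j"
  using mem_union_upto_iff[OF k] .

lemma Suc_a_mem_union_upto_iff: "a + 1 \<in> union_upto I j \<longleftrightarrow> l \<le> j"
  using mem_union_upto_iff[OF l] .

lemma L_bounds: "1 \<le> L" "L \<le> N"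
  using k l by auto

lemma iel_mem_union_upto: "j \<le> N \<Longrightarrow> c \<in> {1..m j} \<Longrightarrow> e j c \<in> union_upto I j"
  using sorted_nth_in[OF finite_union_upto[of j], of c] card_union_upto by (simp add: iel_eq_sorted_nth)

lemma inj_on_iel: "j \<le> N \<Longrightarrow> inj_on (e j) {1..m j}"
  using inj_on_sorted_nth[OF finite_union_upto[of j]] card_union_upto
  by (simp add: iel_eq_sorted_nth[abs_def])

lemma iel_swapI_eq:
  "j \<le> N \<Longrightarrow> c \<in> {1..m j} \<Longrightarrow> e' j c = (if L \<le> j then e j c else sw a (e j c))"
  using iel_swapI[OF finite_union_upto[of j], of c a] card_union_upto
    a_mem_union_upto_iff Suc_a_mem_union_upto_iff
  by simp

lemma pos_adjacent:
  assumes "L \<le> j" "j \<le> N"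
  shows "1 \<le> pos j" "pos j + 1 \<le> m j" "e j (pos j) = a" "e j (pos j + 1) = a + 1"
proof -
  have "a \<in> union_upto I j" "a + 1 \<in> union_upto I j"
    using assms a_mem_union_upto_iff Suc_a_mem_union_upto_iff by auto
  then obtain q where "1 \<le> q" "q + 1 \<le> m j" "e j q = a" "e j (q+1) = a + 1"
    using sorted_nth_adjacent[OF finite_union_upto[of j]] card_union_upto[OF assms(2)]
    by (metis iel_eq_sorted_nth)
  then have "\<exists>q. 1 \<le> q \<and> q + 1 \<le> m j \<and> e j q = a \<and> e j (q+1) = a + 1" by blast
  from someI_ex[OF this]
  show "1 \<le> pos j" "pos j + 1 \<le> m j" "e j (pos j) = a" "e j (pos j + 1) = a + 1"
    unfolding pos_def by auto
qed

lemma m_top: "m N = n"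
  using lam_sum by (simp add: lamsum_def)

lemma iel_top: "c \<in> {1..n} \<Longrightarrow> e N c = c"
proof -
  assume c: "c \<in> {1..n}"
  have "union_upto I N = {1..<Suc n}"
    using part_Union by (auto simp: union_upto_def)
  then have "sorted_list_of_set (union_upto I N) = [1..<Suc n]"
    by (simp only: sorted_list_of_set_range)
  then show ?thesis using c by (simp del: upt_Suc add: iel_eq_sorted_nth nth_upt)
qed

lemma pos_top: "pos N = a"
  using pos_adjacent[of N] iel_top[of "pos N"] m_top L_bounds by auto

lemma row_entries:
  assumes "1 \<le> j" "j + 1 \<le> N"
  shows "0 \<notin> t j ` {1..m j}" "inj_on (t j) {1..m j}"
proof -
  have j: "j \<in> {1..N-1}" using assms by auto
  show "0 \<notin> t j ` {1..m j}" using t_nz[OF j] by force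
  show "inj_on (t j) {1..m j}" using t_dist[OF j] by (meson inj_onI)
qed

lemma level_factor_splits_block_above:
  "L \<le> j \<Longrightarrow> j + 1 \<le> N \<Longrightarrow> level_factor_splits_block h m e j (pos j) (pos (Suc j))"
  using pos_adjacent[of j] pos_adjacent[of "Suc j"] inj_on_iel[of j] inj_on_iel[of "Suc j"]
  by (intro level_factor_splits_blockI) auto

lemma level_factor_swapI_above:
  "L \<le> i \<Longrightarrow> i + 1 \<le> N \<Longrightarrow> level_factor h m e' i u v = level_factor h m e i u v"
  unfolding level_factor_def
  by (rule arg_cong2[where f="(*)"], rule cross_prod_cong_order) (auto simp: iel_swapI_eq)

text \<open>Below level \<open>L - 1\<close> at most one of \<open>a\<close>, \<open>a + 1\<close> occurs in two consecutive rows, so relabelling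
  by \<open>sw a\<close> preserves every comparison.\<close>
lemma level_factor_swapI_below:
  assumes i: "i + 1 < L"
  shows "level_factor h m e' i u v = level_factor h m e i u v"
proof -
  have iN: "Suc i \<le> N" "i \<le> N" using i L_bounds by auto
  have not_both: "\<not> (a \<in> union_upto I (Suc i) \<and> a + 1 \<in> union_upto I (Suc i))"
    using i a_mem_union_upto_iff Suc_a_mem_union_upto_iff by auto
  show ?thesis
    unfolding level_factor_def
  proof (rule arg_cong2[where f="(*)"], rule cross_prod_cong_order, rule ballI)
    fix p assume p: "p \<in> {1..m i} \<times> {1..m (Suc i)}"
    obtain b c where pe: "p = (b, c)" by force
    have b: "b \<in> {1..m i}" and c: "c \<in> {1..m (Suc i)}" using p pe by auto
    have "e i b \<in> union_upto I (Suc i)"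
      using iel_mem_union_upto[OF iN(2) b] union_upto_mono[of i "Suc i"] by auto
    moreover have "e (Suc i) c \<in> union_upto I (Suc i)" using iel_mem_union_upto[OF iN(1) c] .
    ultimately have "\<not> ((e (Suc i) c = a \<and> e i b = a + 1) \<or> (e (Suc i) c = a + 1 \<and> e i b = a))"
      "\<not> ((e i b = a \<and> e (Suc i) c = a + 1) \<or> (e i b = a + 1 \<and> e (Suc i) c = a))"
      using not_both by auto
    moreover have "e' i b = sw a (e i b)" "e' (Suc i) c = sw a (e (Suc i) c)"
      using iel_swapI_eq[OF iN(2) b] iel_swapI_eq[OF iN(1) c] i by auto
    ultimately show "(e' (Suc i) (snd p) < e' i (fst p)) = (e (Suc i) (snd p) < e i (fst p)) \<and>
          (e' i (fst p) < e' (Suc i) (snd p)) = (e i (fst p) < e (Suc i) (snd p))"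
      unfolding pe fst_conv snd_conv by (simp add: sw_less_iff)
  qed simp
qed


text \<open>At level \<open>L - 1\<close> exactly one of \<open>a\<close>, \<open>a + 1\<close> occurs, in the entry \<open>r\<close>; relabelling by
  \<open>sw a\<close> only affects the two factors coupling \<open>r\<close> with the positions of \<open>a\<close>, \<open>a + 1\<close> in the next row.\<close>
lemma level_factor_swapI_meeting:
  assumes j: "1 \<le> j" "Suc j = L" and q_def: "q = pos (Suc j)" and r: "r \<in> {1..m j}" "e j r = A" and A: "A = a \<or> A = a + 1"
    and others: "\<forall>b\<in>{1..m j}. b \<noteq> r \<longrightarrow> e j b \<noteq> a \<and> e j b \<noteq> a + 1"
    and exchange: "cross_factor h (sw a A) a (v q) (u r) * cross_factor h (sw a A) (a+1) (v (q+1)) (u r)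
        = \<alpha> * (cross_factor h A a (v (q+1)) (u r) * cross_factor h A (a+1) (v q) (u r))
          + \<beta> * (cross_factor h A a (v q) (u r) * cross_factor h A (a+1) (v (q+1)) (u r))"
  shows "level_factor h m e' j u v = \<alpha> * level_factor h m e j u (v \<circ> sw q) + \<beta> * level_factor h m e j u v"
proof -
  have jN: "Suc j \<le> N" "j \<le> N" using j L_bounds by auto
  have q: "1 \<le> q" "q + 1 \<le> m (Suc j)" "e (Suc j) q = a" "e (Suc j) (q + 1) = a + 1"
    using pos_adjacent[of "Suc j"] j jN unfolding q_def by auto
  define Rb where "Rb = {1..m j} \<times> {1..m (Suc j)} - {r} \<times> {q, q+1}"
  define C where "C u v = cross_prod h (e j) (e (Suc j)) Rb u v * pair_prod h (upper_pairs (m j)) u"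
    for u v
  note split_row = cross_prod_split_row[OF r(1) q(1,2), folded Rb_def]
  have next_apart: "e (Suc j) c \<noteq> a \<and> e (Suc j) c \<noteq> a + 1"
    if "c \<in> {1..m (Suc j)}" "c \<notin> {q, q+1}" for c
    using that q by (intro inj_on_apart_adjacent[OF inj_on_iel[OF jN(1)]]) auto
  have "cross_prod h (e' j) (e' (Suc j)) ({1..m j} \<times> {1..m (Suc j)}) u v
      = cross_prod h (sw a \<circ> e j) (e (Suc j)) ({1..m j} \<times> {1..m (Suc j)}) u v"
    by (rule cross_prod_cong_order) (use j jN in \<open>auto simp: iel_swapI_eq\<close>)
  also have "\<dots> = cross_prod h (sw a \<circ> e j) (e (Suc j)) Rb u v
      * (cross_factor h (sw a A) a (v q) (u r) * cross_factor h (sw a A) (a+1) (v (q+1)) (u r))"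
    using split_row[of h "sw a \<circ> e j" "e (Suc j)" u v] q r by simp
  also have "cross_prod h (sw a \<circ> e j) (e (Suc j)) Rb u v = cross_prod h (e j) (e (Suc j)) Rb u v"
  proof (rule cross_prod_cong_order, rule ballI)
    fix p assume p: "p \<in> Rb"
    obtain b c where pe: "p = (b, c)" by force
    show "(e (Suc j) (snd p) < (sw a \<circ> e j) (fst p)) = (e (Suc j) (snd p) < e j (fst p)) \<and>
          ((sw a \<circ> e j) (fst p) < e (Suc j) (snd p)) = (e j (fst p) < e (Suc j) (snd p))"
    proof (cases "b = r")
      case True
      then have "e (Suc j) c \<noteq> a \<and> e (Suc j) c \<noteq> a + 1"
        using p pe next_apart by (auto simp: Rb_def)
      then show ?thesis using True r A pe by (auto simp: sw_def)
    next
      case False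
      then have "e j b \<noteq> a \<and> e j b \<noteq> a + 1" using others p pe by (auto simp: Rb_def)
      then show ?thesis using pe by (auto simp: sw_def)
    qed
  qed
  finally have level_swapI: "level_factor h m e' j u v
      = C u v * (cross_factor h (sw a A) a (v q) (u r) * cross_factor h (sw a A) (a+1) (v (q+1)) (u r))"
    by (simp add: level_factor_def C_def mult_ac)
  have level: "level_factor h m e j u v
      = C u v * (cross_factor h A a (v q) (u r) * cross_factor h A (a+1) (v (q+1)) (u r))" for v
    using split_row[of h "e j" "e (Suc j)" u v] q r by (simp add: level_factor_def C_def mult_ac)
  have "\<forall>p\<in>Rb. (fst p, sw q (snd p)) \<in> Rb"
  proof
    fix p assume "p \<in> Rb"
    then show "(fst p, sw q (snd p)) \<in> Rb"
      unfolding Rb_def Diff_iff mem_Times_iff fst_conv snd_conv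
        sw_mem_atLeastAtMost_iff[OF q(1,2)] sw_mem_adjacent_iff .
  qed
  moreover have "\<forall>p\<in>Rb. snd p \<in> {q, q+1} \<longrightarrow> e j (fst p) \<noteq> a \<and> e j (fst p) \<noteq> a + 1"
    using others by (auto simp: Rb_def)
  ultimately have "cross_prod h (e j) (e (Suc j)) Rb u (v \<circ> sw q) = cross_prod h (e j) (e (Suc j)) Rb u v"
    by (rule cross_prod_comp_sw_right[OF _ q(3,4)])
  then have "level_factor h m e j u (v \<circ> sw q)
      = C u v * (cross_factor h A a (v (q+1)) (u r) * cross_factor h A (a+1) (v q) (u r))"
    unfolding level[of "v \<circ> sw q"] by (simp add: C_def sw_def)
  then show ?thesis
    unfolding level_swapI level exchange by (simp add: algebra_simps)
qed


text \<open>\<open>A\<close> is whichever of \<open>a\<close>, \<open>a + 1\<close> enters \<open>I_1 \<union> ... \<union> I_j\<close> first.\<close>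
lemma partial_sym_swapI_meeting:
  assumes kl: "k \<noteq> l" and A_def: "A = (if k < l then a else a + 1)"
    and exchange: "\<And>u. u \<noteq> 0 \<Longrightarrow>
        cross_factor h (sw a A) a (v (pos L)) u * cross_factor h (sw a A) (a+1) (v (pos L + 1)) u
      = \<alpha> * (cross_factor h A a (v (pos L + 1)) u * cross_factor h A (a+1) (v (pos L)) u)
        + \<beta> * (cross_factor h A a (v (pos L)) u * cross_factor h A (a+1) (v (pos L + 1)) u)"
  shows "partial_sym h m e' t L v = \<alpha> * partial_sym h m e t L (v \<circ> sw (pos L)) + \<beta> * partial_sym h m e t L v"
proof -
  obtain j where j: "Suc j = L" "1 \<le> j" using kl k l by (cases L) auto
  have jN: "Suc j \<le> N" "j \<le> N" "j + 1 \<le> N" using j L_bounds by auto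
  define B where "B = (if k < l then a + 1 else a)"
  have A_in: "A \<in> union_upto I j" and B_out: "B \<notin> union_upto I j"
    using kl j A_def B_def a_mem_union_upto_iff Suc_a_mem_union_upto_iff by (auto split: if_splits)
  obtain r where r: "r \<in> {1..m j}" "e j r = A"
    using sorted_nth_surj[OF finite_union_upto A_in] card_union_upto[OF jN(2)]
    by (metis iel_eq_sorted_nth)
  have others: "\<forall>b\<in>{1..m j}. b \<noteq> r \<longrightarrow> e j b \<noteq> a \<and> e j b \<noteq> a + 1"
  proof (intro ballI impI)
    fix b assume b: "b \<in> {1..m j}" "b \<noteq> r"
    have "e j b \<noteq> A" using inj_onD[OF inj_on_iel[OF jN(2)], of b r] b r by auto
    moreover have "e j b \<noteq> B" using iel_mem_union_upto[OF jN(2) b(1)] B_out by auto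
    ultimately show "e j b \<noteq> a \<and> e j b \<noteq> a + 1" using A_def B_def by (auto split: if_splits)
  qed
  have below: "partial_sym h m e' t j u = partial_sym h m e t j u" for u
    by (rule partial_sym_cong) (rule level_factor_swapI_below, use j in auto)
  have level: "level_factor h m e' j u v = \<alpha> * level_factor h m e j u (v \<circ> sw (pos L))
      + \<beta> * level_factor h m e j u v" if "u r \<noteq> 0" for u
  proof (rule level_factor_swapI_meeting[OF j(2) j(1) _ r _ others])
    show "pos L = pos (Suc j)" "A = a \<or> A = a + 1" using j A_def by simp_all
  qed (rule exchange[OF that])
  show ?thesis
    using partial_sym_Suc_linear[OF j(2) below level r(1) row_entries(1)[OF j(2) jN(3)]] j(1) by simp
qed


lemma partial_sym_comp_sw_pos:
  assumes kl: "k = l"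
  shows "L \<le> j \<Longrightarrow> j \<le> N \<Longrightarrow> v (pos j) \<noteq> 0 \<Longrightarrow> v (pos j + 1) \<noteq> 0 \<Longrightarrow> v (pos j) \<noteq> v (pos j + 1)
     \<Longrightarrow> partial_sym h m e t j (v \<circ> sw (pos j)) = partial_sym h m e t j v"
proof (induction j arbitrary: v)
  case 0
  then show ?case using L_bounds by auto
next
  case (Suc j)
  show ?case
  proof (cases "Suc j = L")
    case True
    show ?thesis
    proof (cases "j = 0")
      case False
      let ?q = "pos (Suc j)"
      have q: "1 \<le> ?q" "?q + 1 \<le> m (Suc j)" "e (Suc j) ?q = a" "e (Suc j) (?q + 1) = a + 1"
        using pos_adjacent Suc.prems by auto
      have apart: "e j b \<noteq> a \<and> e j b \<noteq> a + 1" if "b \<in> {1..m j}" for b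
        using iel_mem_union_upto[OF _ that] a_mem_union_upto_iff Suc_a_mem_union_upto_iff
          True kl Suc.prems by fastforce
      have "\<forall>p\<in>{1..m j} \<times> {1..m (Suc j)}. (fst p, sw ?q (snd p)) \<in> {1..m j} \<times> {1..m (Suc j)}"
        using sw_mem_atLeastAtMost_iff[OF q(1,2)] by auto
      then have "cross_prod h (e j) (e (Suc j)) ({1..m j} \<times> {1..m (Suc j)}) u (v \<circ> sw ?q)
          = cross_prod h (e j) (e (Suc j)) ({1..m j} \<times> {1..m (Suc j)}) u v" for u
        by (rule cross_prod_comp_sw_right[OF _ q(3,4)]) (use apart in auto)
      then have "level_factor h m e j u (v \<circ> sw ?q) = level_factor h m e j u v" for u
        by (simp add: level_factor_def)
      with False show ?thesis by (simp add: o_def)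
    qed simp
  next
    case False
    then have Lj: "L \<le> j" and jN: "j + 1 \<le> N" and j: "1 \<le> j" using Suc.prems L_bounds by auto
    have IH: "partial_sym h m e t j (u \<circ> sw (pos j)) = partial_sym h m e t j u"
      if "u (pos j) \<noteq> 0" "u (pos j + 1) \<noteq> 0" "u (pos j) \<noteq> u (pos j + 1)" for u
      using Suc.IH[of u] Lj jN that by linarith
    show ?thesis
      using pos_adjacent[OF Lj] jN
      by (intro partial_sym_Suc_swap_invariant[OF j _ _ IH level_factor_splits_block_above[OF Lj jN]]
          row_entries[OF j jN]) auto
  qed
qed

lemma partial_sym_swapI_exchange:
  assumes meeting: "\<And>v. v (pos L) \<noteq> 0 \<Longrightarrow> v (pos L + 1) \<noteq> 0 \<Longrightarrow> v (pos L) \<noteq> v (pos L + 1) \<Longrightarrow>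
          partial_sym h m e' t L v = \<alpha> (v (pos L)) (v (pos L + 1)) * partial_sym h m e t L (v \<circ> sw (pos L))
                                     + \<beta> (v (pos L)) (v (pos L + 1)) * partial_sym h m e t L v"
    and exchange: "\<And>u1 u2 v1 v2. u1 \<noteq> 0 \<Longrightarrow> u2 \<noteq> 0 \<Longrightarrow> u1 \<noteq> u2 \<Longrightarrow> v1 \<noteq> 0 \<Longrightarrow> v2 \<noteq> 0 \<Longrightarrow> v1 \<noteq> v2 \<Longrightarrow>
          \<alpha> u2 u1 * block_factor h u2 u1 v1 v2 + \<beta> u1 u2 * block_factor h u1 u2 v1 v2
        = \<alpha> v1 v2 * block_factor h u1 u2 v2 v1 + \<beta> v1 v2 * block_factor h u1 u2 v1 v2"
  shows "L \<le> j \<Longrightarrow> j \<le> N \<Longrightarrow> v (pos j) \<noteq> 0 \<Longrightarrow> v (pos j + 1) \<noteq> 0 \<Longrightarrow> v (pos j) \<noteq> v (pos j + 1)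
     \<Longrightarrow> partial_sym h m e' t j v = \<alpha> (v (pos j)) (v (pos j + 1)) * partial_sym h m e t j (v \<circ> sw (pos j))
                                  + \<beta> (v (pos j)) (v (pos j + 1)) * partial_sym h m e t j v"
proof (induction j arbitrary: v)
  case 0
  then show ?case using L_bounds by auto
next
  case (Suc j)
  show ?case
  proof (cases "Suc j = L")
    case True
    show ?thesis using Suc.prems(3-5) unfolding True by (rule meeting)
  next
    case False
    then have Lj: "L \<le> j" and jN: "j + 1 \<le> N" and j: "1 \<le> j" using Suc.prems L_bounds by auto
    have IH: "partial_sym h m e' t j u = \<alpha> (u (pos j)) (u (pos j + 1)) * partial_sym h m e t j (u \<circ> sw (pos j))
        + \<beta> (u (pos j)) (u (pos j + 1)) * partial_sym h m e t j u"
      if "u (pos j) \<noteq> 0" "u (pos j + 1) \<noteq> 0" "u (pos j) \<noteq> u (pos j + 1)" for u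
      using Suc.IH[of u] Lj jN that by linarith
    show ?thesis
      using pos_adjacent[OF Lj] jN Suc.prems(3-5) exchange
      by (intro partial_sym_Suc_exchange[OF j _ _ IH level_factor_swapI_above[OF Lj jN]
          level_factor_splits_block_above[OF Lj jN] row_entries[OF j jN]]) auto
  qed
qed

lemma partial_sym_swapI_meeting_lt:
  assumes "k < l" "v (pos L) \<noteq> 0" "v (pos L + 1) \<noteq> 0" "v (pos L) \<noteq> v (pos L + 1)"
  shows "partial_sym h m e' t L v = alpha_lt h (v (pos L)) (v (pos L + 1)) * partial_sym h m e t L (v \<circ> sw (pos L))
           + beta_lt h (v (pos L)) (v (pos L + 1)) * partial_sym h m e t L v"
  by (rule partial_sym_swapI_meeting[where A = a])
     (use assms cross_exchange_lt[of _ "v (pos L)" "v (pos L + 1)" h] in \<open>auto simp: sw_def cross_factor_def\<close>)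

lemma partial_sym_swapI_meeting_gt:
  assumes "l < k" "v (pos L) \<noteq> 0" "v (pos L + 1) \<noteq> 0" "v (pos L) \<noteq> v (pos L + 1)"
  shows "partial_sym h m e' t L v = alpha_gt h (v (pos L)) (v (pos L + 1)) * partial_sym h m e t L (v \<circ> sw (pos L))
           + beta_gt h (v (pos L)) (v (pos L + 1)) * partial_sym h m e t L v"
  by (rule partial_sym_swapI_meeting[where A = "a + 1"])
     (use assms h cross_exchange_gt[of _ "v (pos L)" "v (pos L + 1)" h] in \<open>auto simp: sw_def cross_factor_def\<close>)

lemma W_fun_comp_sw_eq:
  assumes "k = l" "z a \<noteq> 0" "z (a + 1) \<noteq> 0" "z a \<noteq> z (a + 1)"
  shows "W_fun N lam h I t (z \<circ> sw a) = W_fun N lam h I t z"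
  using partial_sym_comp_sw_pos[OF assms(1) L_bounds(2) order_refl] assms(2-4)
  by (simp add: W_fun_eq_partial_sym[OF N] pos_top)

lemma W_fun_swapI_lt:
  assumes "k < l" "z a \<noteq> 0" "z (a + 1) \<noteq> 0" "z a \<noteq> z (a + 1)"
  shows "W_fun N lam h (swapI a I) t z = alpha_lt h (z a) (z (a + 1)) * W_fun N lam h I t (z \<circ> sw a)
           + beta_lt h (z a) (z (a + 1)) * W_fun N lam h I t z"
  using partial_sym_swapI_exchange[OF partial_sym_swapI_meeting_lt[OF assms(1)] block_exchange_lt
      L_bounds(2) order_refl] assms(2-4)
  by (simp add: W_fun_eq_partial_sym[OF N] pos_top algebra_simps)

lemma W_fun_swapI_gt:
  assumes "l < k" "z a \<noteq> 0" "z (a + 1) \<noteq> 0" "z a \<noteq> z (a + 1)"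
  shows "W_fun N lam h (swapI a I) t z = alpha_gt h (z a) (z (a + 1)) * W_fun N lam h I t (z \<circ> sw a)
           + beta_gt h (z a) (z (a + 1)) * W_fun N lam h I t z"
  using partial_sym_swapI_exchange[OF partial_sym_swapI_meeting_gt[OF assms(1)] block_exchange_gt[OF _ _ _ _ _ _ h]
      L_bounds(2) order_refl] assms(2-4)
  by (simp add: W_fun_eq_partial_sym[OF N] pos_top algebra_simps)

end

theorem corollary6p11:
  fixes N n a k l :: nat and lam :: "nat \<Rightarrow> nat" and I :: "nat \<Rightarrow> nat set"
    and h :: complex and t :: "nat \<Rightarrow> nat \<Rightarrow> complex" and z :: "nat \<Rightarrow> complex"
  assumes N: "N \<ge> 1"
    and lam_sum: "(\<Sum>j=1..N. lam j) = n"
    and I: "I \<in> ordered_partitions N n lam"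
    and a: "1 \<le> a" "a \<le> n - 1"
    and k: "k \<in> {1..N}" "a \<in> I k"
    and l: "l \<in> {1..N}" "a + 1 \<in> I l"
    and h: "h \<noteq> 0"
    and t_nz: "\<And>j b. j \<in> {1..N-1} \<Longrightarrow> b \<in> {1..lamsum lam j} \<Longrightarrow> t j b \<noteq> 0"
    and t_dist: "\<And>j b c. j \<in> {1..N-1} \<Longrightarrow> b \<in> {1..lamsum lam j} \<Longrightarrow>
                   c \<in> {1..lamsum lam j} \<Longrightarrow> b \<noteq> c \<Longrightarrow> t j b \<noteq> t j c"
    and z: "z a \<noteq> 0" "z (a + 1) \<noteq> 0" "z a \<noteq> z (a + 1)"
  shows
   "(k = l \<longrightarrow> W_fun N lam h I t (z \<circ> sw a) = W_fun N lam h I t z)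
  \<and> (k < l \<longrightarrow> W_fun N lam h (swapI a I) t z =
        (1 - h * z a / z (a + 1)) / (1 - z a / z (a + 1)) * W_fun N lam h I t (z \<circ> sw a)
      + (h - 1) * ((z a / z (a + 1)) / (1 - z a / z (a + 1))) * W_fun N lam h I t z)
  \<and> (k > l \<longrightarrow> W_fun N lam h (swapI a I) t z =
        (1 - inverse h * z (a + 1) / z a) / (1 - z (a + 1) / z a) * W_fun N lam h I t (z \<circ> sw a)
      + (inverse h - 1) * ((z (a + 1) / z a) / (1 - z (a + 1) / z a)) * W_fun N lam h I t z)"
proof -
  interpret adjacent_swap N n lam I a k l h t
    using N lam_sum I k l h t_nz t_dist by unfold_locales
  show ?thesis
    using W_fun_comp_sw_eq[OF _ z] W_fun_swapI_lt[OF _ z] W_fun_swapI_gt[OF _ z]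
    by (simp add: alpha_lt_def beta_lt_def alpha_gt_def beta_gt_def)
qed

end
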